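(* The cocharacter (coweight) lattice \(Y(G(\psi)) = \operatorname{Hom}(\mathbb{G}_m, T_{G(\psi)})\) of \(G(\psi)\) has the following \(\mathbb{Z}\)-basis \(\gamma_0^\vee, \ldots, \gamma_n^\vee\) (elements of \(Y(\mathrm{GL}(W))\otimes\mathbb{Q}\)): \[ \gamma_i^\vee = \begin{cases} \left(\frac{k}{n+1}-1\right)\tau_W^\vee + \psi(e_i^\vee), & 0\le i\le k-2,\\[2pt] \frac{k}{n+1}\,\tau_W^\vee + \psi(e_i^\vee), & k-1\le i\le n.\end{cases} \]
   Context: \(\Bbbk\) is an algebraically closed field of characteristic zero. \(V\) has basis \(e_0,\ldots,e_n\), \(1\le k\le n\), \(G=\mathrm{SL}(V)\) with diagonal maximal torus \(T_G\), \(W=\Lambda^k(V)\) with basis \(e_I=e_{i_1}\wedge\cdots\wedge e_{i_k}\) for \(I=\{i_1<\cdots<i_k\}\), and \(\psi\colon G\to\mathrm{GL}(W)\) the fundamental representation. \(G(\psi)=\psi(G)\cdot Z(\mathrm{GL}(W))\subset\mathrm{GL}(W)\), with maximal torus \(T_{G(\psi)}=\psi(T_G)\cdot Z(\mathrm{GL}(W))\) contained in the diagonal torus \(T_W\) of \(\mathrm{GL}(W)\) (w.r.t. the basis \(e_I\)); so \(Y(G(\psi))\subset Y(T_W)\simeq\mathbb{Z}^{\{I\}}\), and all these lattices sit in \(Y(T_W)\otimes\mathbb{Q}\). \(\tau_W^\vee\colon c\mapsto c\cdot\mathrm{Id}_W\) is the central cocharacter. Let \(\varepsilon_i\) be the cocharacter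 of the diagonal torus of \(\mathrm{GL}(V)\) putting \(c\) in position \(i\) and \(1\) elsewhere. Let \(\omega_j^\vee=\sum_{l<j}\varepsilon_l-\frac{j}{n+1}\sum_{l=0}^n\varepsilon_l\) (\(j=1,\dots,n\)) be the (rational) fundamental coweights of \(\mathrm{SL}(V)\), \(\omega_0^\vee=\omega_{n+1}^\vee=0\), and \(e_i^\vee=\omega_{i+1}^\vee-\omega_i^\vee=\varepsilon_i-\frac1{n+1}\sum_l\varepsilon_l\) for \(i=0,\dots,n\). \(\psi\) is extended \(\mathbb{Q}\)-linearly to rational cocharacters; explicitly \(\psi(e_i^\vee)\) acts on \(e_I\) with weight \([i\in I]-\frac{k}{n+1}\). *)

theory Defs
  imports Complex_Main "HOL-Computational_Algebra.Polynomial"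
begin

text \<open>Index set of the basis e_I of W = Lambda^k V: k-subsets of {0..n}.\<close>
definition ksubsets :: "nat \<Rightarrow> nat \<Rightarrow> nat set set" where
  "ksubsets n k = {I. I \<subseteq> {0..n} \<and> card I = k}"

text \<open>Diagonal elements of T_{G(psi)} = psi(T_G) * Z(GL(W)), as diagonal entries
  indexed by the basis e_I: psi(diag(t_0..t_n)) acts on e_I by prod_{i in I} t_i.\<close>
definition torus_Gpsi :: "nat \<Rightarrow> nat \<Rightarrow> (nat set \<Rightarrow> 'k::field) set" where
  "torus_Gpsi n k = {d. \<exists>t z. (\<forall>i\<le>n. t i \<noteq> 0) \<and> (\<Prod>i\<le>n. t i) = 1 \<and> z \<noteq> 0 \<and>
       (\<forall>I\<in>ksubsets n k. d I = z * (\<Prod>i\<in>I. t i))}"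

text \<open>Y(T_W) = Z^{I}: lam is the cocharacter c \<mapsto> diag(c^{lam I}).
  Y(G(psi)): cocharacters of T_W whose image lies in T_{G(psi)}.\<close>
definition cochar_Gpsi :: "'k::field itself \<Rightarrow> nat \<Rightarrow> nat \<Rightarrow> (nat set \<Rightarrow> int) set" where
  "cochar_Gpsi _ n k = {lam. \<forall>c::'k. c \<noteq> 0 \<longrightarrow> (\<lambda>I. c powi lam I) \<in> torus_Gpsi n k}"

text \<open>Rational cocharacters (elements of Y(T_W) tensor Q), as functions on the index set.\<close>
definition tauW :: "nat set \<Rightarrow> rat" where
  "tauW I = 1"

definition psi_e :: "nat \<Rightarrow> nat \<Rightarrow> nat \<Rightarrow> nat set \<Rightarrow> rat" where
  "psi_e n k i I = (if i \<in> I then 1 else 0) - of_nat k / of_nat (n+1)"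

definition gamma :: "nat \<Rightarrow> nat \<Rightarrow> nat \<Rightarrow> nat set \<Rightarrow> rat" where
  "gamma n k i I =
     (if i + 2 \<le> k then (of_nat k / of_nat (n+1) - 1) * tauW I + psi_e n k i I
      else (of_nat k / of_nat (n+1)) * tauW I + psi_e n k i I)"

end

theory Submission
  imports Defs
begin

text \<open>
  A cocharacter lam of the diagonal torus of GL(W) lies in G(psi) iff it is affine on the
  index set: lam(I) = (sum of b_i over i in I) + C for integers b_i, C. Necessity: evaluate
  at c = 2 and compare S + {i} with S + {n}; the ratios t_i / t_n are then powers of 2, and
  in characteristic 0 distinct powers of 2 differ. Sufficiency: diag(c^b_i) is moved into
  SL(V) by an (n+1)-st root of c^(-sum b), which exists as the field is algebraically closed.
  Now gamma_i(I) = [i in I] - [i < k-1], so sum a_i gamma_i(I) is the sum of a_i over I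
  minus the sum over i < k-1, and every affine function has this form after shifting all
  b_i by one constant. If such a combination vanishes, the exchange argument makes all a_i
  equal to some a, and I = {0..<k} gives k a = (k-1) a.
\<close>

lemma of_rat_power_int: "of_rat (x powi m) = (of_rat x :: 'a::field_char_0) powi m"
  by (simp add: power_int_def of_rat_power of_rat_inverse)

lemma two_power_int_inject: "(2::'a::field_char_0) powi m = 2 powi n \<longleftrightarrow> m = n"
proof
  assume "(2::'a) powi m = 2 powi n"
  then have "of_rat ((2::rat) powi m) = (of_rat (2 powi n) :: 'a)"
    by (simp add: of_rat_power_int)
  then have "(2::rat) powi m = 2 powi n"
    by (simp only: of_rat_eq_iff)
  then show "m = n"
    by (cases m n rule: linorder_cases) (auto dest: power_int_strict_increasing[where a = "2::rat"])
qed simp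

lemma prod_power_int:
  assumes "(x::'a::field) \<noteq> 0"
  shows "(\<Prod>i\<in>I. x powi f i) = x powi (\<Sum>i\<in>I. f i)"
  by (induction I rule: infinite_finite_induct) (simp_all add: power_int_add assms)

lemma alg_closed_imp_ex_root:
  assumes alg_closed: "\<forall>p :: 'a::field poly. degree p \<ge> 1 \<longrightarrow> (\<exists>x. poly p x = 0)"
  shows "\<exists>s::'a. s ^ Suc n = w"
proof -
  define p where "p = monom (1::'a) (Suc n) + [:-w:]"
  have "degree p = Suc n"
    unfolding p_def by (subst degree_add_eq_left) (simp_all add: degree_monom_eq)
  then obtain s where "poly p s = 0"
    using alg_closed[rule_format, of p] by auto
  then show ?thesis
    by (auto simp: p_def poly_monom)
qed

lemma lessThan_in_ksubsets: "k \<le> Suc n \<Longrightarrow> {..<k} \<in> ksubsets n k"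
  by (auto simp: ksubsets_def)

lemma exchange_ksubsets:
  assumes "1 \<le> k" "k \<le> n" "i < n"
  obtains S where "finite S" "i \<notin> S" "n \<notin> S"
    "insert i S \<in> ksubsets n k" "insert n S \<in> ksubsets n k"
proof -
  have "k - 1 \<le> card ({..<n} - {i})"
    using assms by simp
  then obtain S where "S \<subseteq> {..<n} - {i}" "card S = k - 1"
    by (meson obtain_subset_with_card_n)
  moreover have "finite S" "i \<notin> S" "n \<notin> S"
    using \<open>S \<subseteq> {..<n} - {i}\<close> finite_subset by auto
  ultimately show thesis
    using assms by (intro that) (auto simp: ksubsets_def)
qed

lemma sum_const_on_ksubsets_imp_const:
  fixes a :: "nat \<Rightarrow> 'a::cancel_comm_monoid_add"
  assumes "1 \<le> k" "k \<le> n" "\<forall>I\<in>ksubsets n k. sum a I = c" "i \<le> n"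
  shows "a i = a n"
proof (cases "i = n")
  case False
  with assms(4) have "i < n"
    by simp
  then obtain S where S: "finite S" "i \<notin> S" "n \<notin> S"
    "insert i S \<in> ksubsets n k" "insert n S \<in> ksubsets n k"
    by (rule exchange_ksubsets[OF assms(1,2)])
  with assms(3) have "sum a (insert i S) = c" "sum a (insert n S) = c"
    by blast+
  with S show ?thesis
    by (metis add_right_cancel sum.insert)
qed simp

definition gamma_int :: "nat \<Rightarrow> nat \<Rightarrow> nat set \<Rightarrow> int" where
  "gamma_int k i I = of_bool (i \<in> I) - of_bool (i < k - 1)"

lemma gamma_eq_of_int: "gamma n k i I = of_int (gamma_int k i I)"
  by (auto simp: gamma_def gamma_int_def tauW_def psi_e_def)

lemma sum_mult_gamma_int:
  assumes "I \<subseteq> {..n}" "k \<le> Suc (Suc n)"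
  shows "(\<Sum>i\<le>n. a i * gamma_int k i I) = sum a I - (\<Sum>i<k-1. a i)"
proof -
  have "{..n} \<inter> I = I" "{..n} \<inter> {i. i < k - 1} = {..<k-1}"
    using assms by auto
  then show ?thesis
    by (simp add: gamma_int_def right_diff_distrib sum_subtractf)
qed

lemma sum_mult_gamma:
  assumes "I \<in> ksubsets n k" "k \<le> n"
  shows "(\<Sum>i\<le>n. of_int (a i) * gamma n k i I) = of_int (sum a I - (\<Sum>i<k-1. a i))"
  using assms sum_mult_gamma_int[of I n k a]
  by (simp add: gamma_eq_of_int ksubsets_def atLeast0AtMost flip: of_int_mult of_int_sum)

text \<open>The restrictions to W of the cocharacters of the diagonal torus of GL(V).\<close>

definition affine_on_ksubsets :: "nat \<Rightarrow> nat \<Rightarrow> (nat set \<Rightarrow> int) \<Rightarrow> bool" where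
  "affine_on_ksubsets n k lam \<longleftrightarrow> (\<exists>b C. \<forall>I\<in>ksubsets n k. lam I = sum b I + C)"

lemma affine_on_ksubsets_imp_cochar_Gpsi:
  assumes alg_closed: "\<forall>p :: 'k::field_char_0 poly. degree p \<ge> 1 \<longrightarrow> (\<exists>x. poly p x = 0)"
    and "affine_on_ksubsets n k lam"
  shows "lam \<in> cochar_Gpsi TYPE('k) n k"
  unfolding cochar_Gpsi_def
proof (intro CollectI allI impI)
  obtain b C where lam: "\<forall>I\<in>ksubsets n k. lam I = sum b I + C"
    using assms(2) by (auto simp: affine_on_ksubsets_def)
  fix c :: 'k
  assume c: "c \<noteq> 0"
  obtain s where s: "s ^ Suc n = c powi (- (\<Sum>i\<le>n. b i))"
    using alg_closed_imp_ex_root[OF alg_closed] by blast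
  with c have "s \<noteq> 0"
    by auto
  define t where "t i = c powi b i * s" for i
  define z where "z = c powi C / s ^ k"
  have "(\<Prod>i\<le>n. t i) = c powi (\<Sum>i\<le>n. b i) * s ^ Suc n"
    by (simp add: t_def prod.distrib prod_power_int[OF c])
  also have "\<dots> = 1"
    unfolding s using c by (simp add: power_int_minus)
  finally have "(\<Prod>i\<le>n. t i) = 1" .
  moreover have "c powi lam I = z * (\<Prod>i\<in>I. t i)" if "I \<in> ksubsets n k" for I
    using that lam \<open>s \<noteq> 0\<close> c
    by (simp add: z_def t_def prod.distrib prod_power_int ksubsets_def power_int_add)
  ultimately show "(\<lambda>I. c powi lam I) \<in> torus_Gpsi n k"
    unfolding torus_Gpsi_def using c \<open>s \<noteq> 0\<close>
    by (intro CollectI exI[of _ t] exI[of _ z]) (auto simp: t_def z_def)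
qed

lemma torus_ratio_power_int:
  fixes x :: "'k::field"
  assumes "1 \<le> k" "k \<le> n" "i \<le> n" "x \<noteq> 0" "z \<noteq> 0" "\<forall>j\<le>n. t j \<noteq> 0"
    and lam: "\<forall>I\<in>ksubsets n k. x powi lam I = z * (\<Prod>j\<in>I. t j)"
  shows "\<exists>m. t i = t n * x powi m"
proof (cases "i = n")
  case False
  with assms(3) have "i < n"
    by simp
  then obtain S where S: "finite S" "i \<notin> S" "n \<notin> S"
    "insert i S \<in> ksubsets n k" "insert n S \<in> ksubsets n k"
    by (rule exchange_ksubsets[OF assms(1,2)])
  define P where "P = z * (\<Prod>j\<in>S. t j)"
  have "P \<noteq> 0"
    using S(1,4) assms(5,6) by (auto simp: P_def ksubsets_def prod_zero_iff)
  have "x powi lam (insert i S) = t i * P" "x powi lam (insert n S) = t n * P"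
    using lam S by (simp_all add: P_def)
  with \<open>P \<noteq> 0\<close> assms(4,6) have "t i = t n * x powi (lam (insert i S) - lam (insert n S))"
    by (simp add: power_int_diff)
  then show ?thesis ..
next
  case True
  then have "t i = t n * x powi 0"
    by simp
  then show ?thesis ..
qed

lemma cochar_Gpsi_imp_affine_on_ksubsets:
  assumes "1 \<le> k" "k \<le> n" "lam \<in> cochar_Gpsi TYPE('k::field_char_0) n k"
  shows "affine_on_ksubsets n k lam"
proof -
  have "(\<lambda>I. (2::'k) powi lam I) \<in> torus_Gpsi n k"
    using assms(3) by (simp add: cochar_Gpsi_def)
  then obtain t z where t: "\<forall>i\<le>n. t i \<noteq> (0::'k)" and "z \<noteq> 0"
    and lam: "\<forall>I\<in>ksubsets n k. 2 powi lam I = z * (\<Prod>i\<in>I. t i)"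
    unfolding torus_Gpsi_def by blast
  have "\<forall>i\<in>{..n}. \<exists>m. t i = t n * 2 powi m"
    using torus_ratio_power_int[OF assms(1,2) _ _ \<open>z \<noteq> 0\<close> t lam] by simp
  then obtain b where b: "\<forall>i\<in>{..n}. t i = t n * 2 powi b i"
    by (rule bchoice[THEN exE])
  have const: "(2::'k) powi (lam I - sum b I) = z * t n ^ k" if "I \<in> ksubsets n k" for I
  proof -
    have "(\<Prod>i\<in>I. t i) = (\<Prod>i\<in>I. t n * 2 powi b i)"
      using that by (intro prod.cong refl b[rule_format]) (auto simp: ksubsets_def)
    also have "\<dots> = t n ^ k * 2 powi sum b I"
      using that by (simp add: prod.distrib prod_power_int ksubsets_def)
    finally have "(2::'k) powi lam I = z * t n ^ k * 2 powi sum b I"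
      using that lam by (simp add: mult.assoc)
    then show ?thesis
      by (simp add: power_int_diff)
  qed
  have "lam I - sum b I = lam {..<k} - sum b {..<k}" if "I \<in> ksubsets n k" for I
  proof -
    have "(2::'k) powi (lam I - sum b I) = 2 powi (lam {..<k} - sum b {..<k})"
      using const[OF that] const lessThan_in_ksubsets[of k n] assms(2) by simp
    then show ?thesis
      by (simp only: two_power_int_inject)
  qed
  then have "\<forall>I\<in>ksubsets n k. lam I = sum b I + (lam {..<k} - sum b {..<k})"
    by (simp add: algebra_simps)
  then show ?thesis
    unfolding affine_on_ksubsets_def by blast
qed

lemma affine_on_ksubsets_iff_gamma_combination:
  assumes "1 \<le> k" "k \<le> n"
  shows "affine_on_ksubsets n k lam \<longleftrightarrow>
    (\<exists>a. \<forall>I\<in>ksubsets n k. of_int (lam I) = (\<Sum>i\<le>n. of_int (a i) * gamma n k i I))"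
proof
  assume "affine_on_ksubsets n k lam"
  then obtain b C where lam: "\<forall>I\<in>ksubsets n k. lam I = sum b I + C"
    by (auto simp: affine_on_ksubsets_def)
  define d where "d = C + (\<Sum>i<k-1. b i)"
  define a where "a i = b i + d" for i
  have "lam I = sum a I - (\<Sum>i<k-1. a i)" if "I \<in> ksubsets n k" for I
    using that lam assms
    by (simp add: a_def sum.distrib d_def ksubsets_def of_nat_diff algebra_simps)
  then have "of_int (lam I) = (\<Sum>i\<le>n. of_int (a i) * gamma n k i I)" if "I \<in> ksubsets n k" for I
    using that sum_mult_gamma[OF that assms(2), of a] by simp
  then show "\<exists>a. \<forall>I\<in>ksubsets n k. of_int (lam I) = (\<Sum>i\<le>n. of_int (a i) * gamma n k i I)"
    by blast
next
  assume "\<exists>a. \<forall>I\<in>ksubsets n k. of_int (lam I) = (\<Sum>i\<le>n. of_int (a i) * gamma n k i I)"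
  then obtain a where a: "\<forall>I\<in>ksubsets n k. of_int (lam I) = (\<Sum>i\<le>n. of_int (a i) * gamma n k i I)"
    by blast
  have "lam I = sum a I + - (\<Sum>i<k-1. a i)" if "I \<in> ksubsets n k" for I
  proof -
    have "(of_int (lam I) :: rat) = of_int (sum a I - (\<Sum>i<k-1. a i))"
      using a that sum_mult_gamma[OF that assms(2)] by simp
    then show ?thesis
      by (simp only: of_int_eq_iff)
  qed
  then show "affine_on_ksubsets n k lam"
    unfolding affine_on_ksubsets_def by blast
qed

lemma gamma_combination_eq_zero_imp_zero:
  assumes "1 \<le> k" "k \<le> n" "i \<le> n"
    and "\<forall>I\<in>ksubsets n k. (\<Sum>i\<le>n. of_int (a i) * gamma n k i I) = (0::rat)"
  shows "a i = 0"
proof -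
  have sums: "\<forall>I\<in>ksubsets n k. sum a I = (\<Sum>i<k-1. a i)"
    using assms(2,4) by (simp add: sum_mult_gamma del: of_int_sum)
  have const: "a j = a n" if "j \<le> n" for j
    by (rule sum_const_on_ksubsets_imp_const[OF assms(1,2) sums that])
  have "(\<Sum>i<k. a i) = (\<Sum>i<k. a n)" "(\<Sum>i<k-1. a i) = (\<Sum>i<k-1. a n)"
    using assms(2) by (intro sum.cong refl const; simp)+
  moreover have "(\<Sum>i<k. a i) = (\<Sum>i<k-1. a i)"
    using sums assms(2) lessThan_in_ksubsets[of k n] by simp
  ultimately have "of_nat k * a n = of_nat (k - 1) * a n"
    by simp
  then have "a n = 0"
    using assms(1) by (simp add: of_nat_diff algebra_simps)
  then show ?thesis
    using const[OF assms(3)] by simp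
qed

lemma cochar_Gpsi_iff_gamma_combination:
  assumes "1 \<le> k" "k \<le> n"
    and alg_closed: "\<forall>p :: 'k::field_char_0 poly. degree p \<ge> 1 \<longrightarrow> (\<exists>x. poly p x = 0)"
  shows "lam \<in> cochar_Gpsi TYPE('k) n k \<longleftrightarrow>
    (\<exists>a. \<forall>I\<in>ksubsets n k. of_int (lam I) = (\<Sum>i\<le>n. of_int (a i) * gamma n k i I))"
  using affine_on_ksubsets_imp_cochar_Gpsi[OF alg_closed] cochar_Gpsi_imp_affine_on_ksubsets[OF assms(1,2)]
    affine_on_ksubsets_iff_gamma_combination[OF assms(1,2)]
  by blast

lemma gamma_int_in_cochar_Gpsi:
  assumes "1 \<le> k" "k \<le> n" "i \<le> n"
    and alg_closed: "\<forall>p :: 'k::field_char_0 poly. degree p \<ge> 1 \<longrightarrow> (\<exists>x. poly p x = 0)"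
  shows "gamma_int k i \<in> cochar_Gpsi TYPE('k) n k"
proof -
  have "\<forall>I\<in>ksubsets n k. of_int (gamma_int k i I) = (\<Sum>j\<le>n. of_int (of_bool (j = i)) * gamma n k j I)"
    using assms(3) by (simp add: gamma_eq_of_int if_distrib Int_absorb1 cong: if_cong)
  then show ?thesis
    unfolding cochar_Gpsi_iff_gamma_combination[OF assms(1,2) alg_closed]
    by (rule exI[of _ "\<lambda>j. of_bool (j = i)"])
qed

theorem proposition3p5:
  fixes n k :: nat
  assumes "1 \<le> k" and "k \<le> n"
    and alg_closed: "\<forall>p :: 'k::field_char_0 poly. degree p \<ge> 1 \<longrightarrow> (\<exists>x. poly p x = 0)"
  shows "(\<forall>i\<le>n. \<forall>I\<in>ksubsets n k. gamma n k i I \<in> \<int>)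
    \<and> (\<forall>i\<le>n. \<exists>lam\<in>cochar_Gpsi TYPE('k) n k. \<forall>I\<in>ksubsets n k. of_int (lam I) = gamma n k i I)
    \<and> (\<forall>lam. lam \<in> cochar_Gpsi TYPE('k) n k \<longleftrightarrow>
          (\<exists>a :: nat \<Rightarrow> int. \<forall>I\<in>ksubsets n k. of_int (lam I) = (\<Sum>i\<le>n. of_int (a i) * gamma n k i I)))
    \<and> (\<forall>a :: nat \<Rightarrow> int. (\<forall>I\<in>ksubsets n k. (\<Sum>i\<le>n. of_int (a i) * gamma n k i I) = 0)
          \<longrightarrow> (\<forall>i\<le>n. a i = 0))"
proof (intro conjI allI impI ballI)
  show "gamma n k i I \<in> \<int>" for i I
    by (simp add: gamma_eq_of_int)
  show "\<exists>lam\<in>cochar_Gpsi TYPE('k) n k. \<forall>I\<in>ksubsets n k. of_int (lam I) = gamma n k i I"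
    if "i \<le> n" for i
    using gamma_int_in_cochar_Gpsi[OF assms(1,2) that alg_closed] by (auto simp: gamma_eq_of_int)
  show "lam \<in> cochar_Gpsi TYPE('k) n k \<longleftrightarrow>
      (\<exists>a. \<forall>I\<in>ksubsets n k. of_int (lam I) = (\<Sum>i\<le>n. of_int (a i) * gamma n k i I))" for lam
    by (rule cochar_Gpsi_iff_gamma_combination[OF assms])
  show "a i = 0" if "\<forall>I\<in>ksubsets n k. (\<Sum>i\<le>n. of_int (a i) * gamma n k i I) = 0" "i \<le> n"
    for a i
    using gamma_combination_eq_zero_imp_zero[OF assms(1,2) that(2,1)] .
qed

end
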